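(* Let $\mathbf u\in\{0,1\}^{\mathbb N}$ with $\mathbf u\ne0^k\overline1$ and $\mathbf u\ne1^k\overline0$ for all $k\ge0$. Then there is a suffix $\mathbf v$ of $\mathbf u$ such that $\inf(\mathbf v)=\inf_1(\mathbf v)=\inf_1(\mathbf u)$ and $\sup(\mathbf v)=\sup_0(\mathbf v)=\sup_0(\mathbf u)$.
   Context: Infinite words over $\{0,1\}$ are ordered lexicographically; $\overline{a}$ denotes infinite repetition of $a$ and $0^k$ is the word of $k$ zeros. For $\mathbf u=u_1u_2\cdots\in\{0,1\}^{\mathbb N}$, $\sup(\mathbf u)$ and $\inf(\mathbf u)$ are the lexicographic supremum and infimum of $\{u_ku_{k+1}\cdots:k\ge1\}$, $\inf_1(\mathbf u)=\inf\{u_{k+1}u_{k+2}\cdots:k\ge1,\ u_k=1\}$ and $\sup_0(\mathbf u)=\sup\{u_{k+1}u_{k+2}\cdots:k\ge1,\ u_k=0\}$. A suffix of $\mathbf u$ is a word $u_ku_{k+1}\cdots$ with $k\ge1$. *)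

theory Defs
  imports Main
begin

text \<open>Infinite binary words u = u_1 u_2 ... are represented as functions nat => bool,
  indexed from 0 (u i is the letter u_{i+1}); True stands for letter 1, False for letter 0.\<close>

type_synonym bword = "nat \<Rightarrow> bool"

definition lex_less :: "bword \<Rightarrow> bword \<Rightarrow> bool" where
  "lex_less u v \<longleftrightarrow> (\<exists>n. (\<forall>i<n. u i = v i) \<and> \<not> u n \<and> v n)"

definition lex_le :: "bword \<Rightarrow> bword \<Rightarrow> bool" where
  "lex_le u v \<longleftrightarrow> u = v \<or> lex_less u v"

definition lsup :: "bword set \<Rightarrow> bword" where
  "lsup S = (THE s. (\<forall>x\<in>S. lex_le x s) \<and> (\<forall>t. (\<forall>x\<in>S. lex_le x t) \<longrightarrow> lex_le s t))"

definition linf :: "bword set \<Rightarrow> bword" where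
  "linf S = (THE s. (\<forall>x\<in>S. lex_le s x) \<and> (\<forall>t. (\<forall>x\<in>S. lex_le t x) \<longrightarrow> lex_le t s))"

text \<open>The suffix u_{k+1} u_{k+2} ... (0-based: drop the first k letters).\<close>
definition suffix :: "bword \<Rightarrow> nat \<Rightarrow> bword" where
  "suffix u k = (\<lambda>i. u (i + k))"

definition wsup :: "bword \<Rightarrow> bword" where
  "wsup u = lsup {suffix u k | k. True}"

definition winf :: "bword \<Rightarrow> bword" where
  "winf u = linf {suffix u k | k. True}"

definition inf1 :: "bword \<Rightarrow> bword" where
  "inf1 u = linf {suffix u (k + 1) | k. u k}"

definition sup0 :: "bword \<Rightarrow> bword" where
  "sup0 u = lsup {suffix u (k + 1) | k. \<not> u k}"

end

theory Submission imports Defs begin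

text \<open>
  Call k good if dropping the first k letters changes neither \<open>inf\<^sub>1\<close> nor \<open>sup\<^sub>0\<close>.
  Dropping one letter can only change \<open>inf\<^sub>1\<close> if that letter is a 1 immediately followed by
  \<open>inf\<^sub>1\<close> itself, and dually for \<open>sup\<^sub>0\<close>. Hence at the last good k before goodness is lost,
  the suffix is \<open>1\<cdot>inf\<^sub>1(u)\<close> or \<open>0\<cdot>sup\<^sub>0(u)\<close>; if goodness is not lost we stop right after an
  occurrence of 01. In all cases the suffix lies between \<open>inf\<^sub>1(u)\<close> and \<open>sup\<^sub>0(u)\<close>: after an
  occurrence of 01 stands \<open>1w\<close> with w following a 1, so \<open>1\<cdot>inf\<^sub>1(u) \<le> 1w \<le> sup\<^sub>0(u)\<close>, and dually
  for an occurrence of 10. Finally, a word lying above its own \<open>inf\<^sub>1\<close> has all its suffixes above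
  \<open>inf\<^sub>1\<close> too, since prepending a 0 only decreases a word; so its infimum is \<open>inf\<^sub>1\<close>.
\<close>

lemma lex_less_irrefl: "\<not> lex_less u u"
  unfolding lex_less_def by blast

lemma lex_less_asym: "lex_less u v \<Longrightarrow> \<not> lex_less v u"
  unfolding lex_less_def by (metis linorder_neqE_nat)

lemma lex_less_trans:
  assumes "lex_less u v" "lex_less v w"
  shows "lex_less u w"
proof -
  obtain n m where n: "\<forall>i<n. u i = v i" "\<not> u n" "v n"
    and m: "\<forall>i<m. v i = w i" "\<not> v m" "w m"
    using assms unfolding lex_less_def by blast
  show ?thesis
    unfolding lex_less_def using n m
    by (cases n m rule: linorder_cases) (auto intro!: exI[of _ "min n m"])
qed

lemma lex_less_linear: "u \<noteq> v \<Longrightarrow> lex_less u v \<or> lex_less v u"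
proof -
  assume "u \<noteq> v"
  then obtain n where n: "u n \<noteq> v n" "\<forall>i<n. u i = v i"
    using exists_least_iff[of "\<lambda>n. u n \<noteq> v n"] by auto
  then show ?thesis unfolding lex_less_def by (cases "u n") auto
qed

interpretation lex: linorder lex_le lex_less
proof
  fix x y z :: bword
  show "lex_less x y = (lex_le x y \<and> \<not> lex_le y x)"
    unfolding lex_le_def using lex_less_asym lex_less_irrefl by blast
  show "lex_le x x" unfolding lex_le_def by simp
  show "lex_le x y \<Longrightarrow> lex_le y z \<Longrightarrow> lex_le x z"
    unfolding lex_le_def using lex_less_trans by blast
  show "lex_le x y \<Longrightarrow> lex_le y x \<Longrightarrow> x = y"
    unfolding lex_le_def using lex_less_asym by blast
  show "lex_le x y \<or> lex_le y x"
    unfolding lex_le_def using lex_less_linear by blast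
qed

text \<open>
  The infimum of an arbitrary set of words exists: its letters are chosen greedily,
  letter n being 1 iff every member agreeing with the prefix chosen so far has a 1 there.
\<close>

primrec greedy_prefix :: "bword set \<Rightarrow> nat \<Rightarrow> bool list" where
  "greedy_prefix S 0 = []"
| "greedy_prefix S (Suc n) = greedy_prefix S n @
     [\<forall>x\<in>S. (\<forall>i<n. x i = greedy_prefix S n ! i) \<longrightarrow> x n]"

definition greedy_inf :: "bword set \<Rightarrow> bword" where
  "greedy_inf S n = greedy_prefix S (Suc n) ! n"

lemma length_greedy_prefix [simp]: "length (greedy_prefix S n) = n"
  by (induction n) auto

lemma greedy_prefix_nth: "i < n \<Longrightarrow> greedy_prefix S n ! i = greedy_inf S i"
  by (induction n) (auto simp: nth_append greedy_inf_def less_Suc_eq)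

lemma greedy_inf_iff:
  "greedy_inf S n \<longleftrightarrow> (\<forall>x\<in>S. (\<forall>i<n. x i = greedy_inf S i) \<longrightarrow> x n)"
  by (simp add: greedy_inf_def nth_append greedy_prefix_nth)

lemma greedy_inf_le: "x \<in> S \<Longrightarrow> lex_le (greedy_inf S) x"
proof (cases "x = greedy_inf S")
  case False
  assume x: "x \<in> S"
  obtain n where n: "greedy_inf S n \<noteq> x n" "\<forall>i<n. greedy_inf S i = x i"
    using False exists_least_iff[of "\<lambda>n. greedy_inf S n \<noteq> x n"] by auto
  then have "\<not> greedy_inf S n"
    using x greedy_inf_iff[of S n] by auto
  then show ?thesis unfolding lex_le_def lex_less_def using n by auto
qed simp

lemma le_greedy_inf:
  assumes "\<forall>x\<in>S. lex_le t x"
  shows "lex_le t (greedy_inf S)"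
proof (rule ccontr)
  assume "\<not> lex_le t (greedy_inf S)"
  then have "lex_less (greedy_inf S) t" by simp
  then obtain n where n: "\<forall>i<n. greedy_inf S i = t i" "\<not> greedy_inf S n" "t n"
    unfolding lex_less_def by blast
  then obtain x where x: "x \<in> S" "\<forall>i<n. x i = t i" "\<not> x n"
    using greedy_inf_iff[of S n] by auto
  then have "lex_less x t" unfolding lex_less_def using n by auto
  then show False using assms x(1) by auto
qed

lemma linf_eq_greedy_inf: "linf S = greedy_inf S"
  unfolding linf_def
  by (rule the_equality) (auto intro: greedy_inf_le le_greedy_inf lex.order_antisym)

lemma linf_lower: "x \<in> S \<Longrightarrow> lex_le (linf S) x"
  by (simp add: linf_eq_greedy_inf greedy_inf_le)

lemma linf_greatest: "(\<And>x. x \<in> S \<Longrightarrow> lex_le t x) \<Longrightarrow> lex_le t (linf S)"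
  by (simp add: linf_eq_greedy_inf le_greedy_inf)

lemma linf_antimono: "S \<subseteq> T \<Longrightarrow> lex_le (linf T) (linf S)"
  by (auto intro: linf_greatest linf_lower)

lemma linf_insert: "linf (insert x T) = x \<or> linf (insert x T) = linf T"
proof (cases "lex_le x (linf T)")
  case True
  then have "lex_le x (linf (insert x T))"
    by (auto intro: linf_greatest lex.order_trans linf_lower)
  then show ?thesis by (metis insertI1 lex.order_antisym linf_lower)
next
  case False
  then have "lex_le (linf T) (linf (insert x T))"
    by (auto intro: linf_greatest linf_lower)
  then show ?thesis by (metis lex.order_antisym linf_antimono subset_insertI)
qed

definition neg :: "bword \<Rightarrow> bword" where
  "neg w = (\<lambda>i. \<not> w i)"

lemma neg_neg [simp]: "neg (neg w) = w"
  by (simp add: neg_def)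

lemma lex_le_neg [simp]: "lex_le (neg u) (neg v) \<longleftrightarrow> lex_le v u"
  unfolding lex_le_def lex_less_def neg_def by (auto simp: fun_eq_iff)

lemma lsup_eq_neg_linf: "lsup S = neg (linf (neg ` S))"
  unfolding lsup_def
proof (rule the_equality)
  have upper: "lex_le x (neg (linf (neg ` S)))" if "x \<in> S" for x
    using linf_lower[of "neg x" "neg ` S"] that by (metis imageI lex_le_neg neg_neg)
  have least: "lex_le (neg (linf (neg ` S))) t" if "\<forall>x\<in>S. lex_le x t" for t
    using linf_greatest[of "neg ` S" "neg t"] that by (metis image_iff lex_le_neg neg_neg)
  show "(\<forall>x\<in>S. lex_le x (neg (linf (neg ` S)))) \<and>
      (\<forall>t. (\<forall>x\<in>S. lex_le x t) \<longrightarrow> lex_le (neg (linf (neg ` S))) t)"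
    using upper least by blast
  show "s = neg (linf (neg ` S))"
    if "(\<forall>x\<in>S. lex_le x s) \<and> (\<forall>t. (\<forall>x\<in>S. lex_le x t) \<longrightarrow> lex_le s t)" for s
    using that upper least by (meson lex.order_antisym)
qed

lemma lsup_upper: "x \<in> S \<Longrightarrow> lex_le x (lsup S)"
  unfolding lsup_eq_neg_linf by (metis imageI lex_le_neg linf_lower neg_neg)

definition wcons :: "bool \<Rightarrow> bword \<Rightarrow> bword" where
  "wcons b w = (\<lambda>i. case i of 0 \<Rightarrow> b | Suc j \<Rightarrow> w j)"

lemma wcons_0 [simp]: "wcons b w 0 = b"
  and wcons_Suc [simp]: "wcons b w (Suc i) = w i"
  by (simp_all add: wcons_def)

lemma suffix_eq_wcons: "suffix u k = wcons (u k) (suffix u (Suc k))"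
  by (simp add: fun_eq_iff suffix_def wcons_def split: nat.split)

lemma neg_wcons: "neg (wcons b w) = wcons (\<not> b) (neg w)"
  by (simp add: fun_eq_iff neg_def wcons_def split: nat.split)

lemma le_wcons_True: "lex_le w (wcons True w)"
proof (cases "\<forall>i. w i")
  case True
  then have "wcons True w = w" by (auto simp: fun_eq_iff wcons_def split: nat.split)
  then show ?thesis by simp
next
  case False
  then obtain a where a: "\<not> w a" "\<forall>i<a. w i"
    using exists_least_iff[of "\<lambda>i. \<not> w i"] by auto
  have wcons_True: "wcons True w i" if "i \<le> a" for i
    using that a(2) by (cases i) auto
  have "lex_less w (wcons True w)"
    unfolding lex_less_def using a wcons_True less_imp_le by blast
  then show ?thesis by (simp add: lex_le_def)
qed

lemma wcons_False_le: "lex_le (wcons False w) w"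
proof -
  have "lex_le (neg w) (neg (wcons False w))"
    by (simp add: neg_wcons le_wcons_True)
  then show ?thesis by simp
qed

lemma wcons_mono:
  assumes "lex_le w w'"
  shows "lex_le (wcons b w) (wcons b w')"
proof (cases "w = w'")
  case False
  with assms obtain n where n: "\<forall>i<n. w i = w' i" "\<not> w n" "w' n"
    unfolding lex_le_def lex_less_def by blast
  then have "\<forall>i<Suc n. wcons b w i = wcons b w' i"
    by (auto simp: less_Suc_eq_0_disj)
  with n have "lex_less (wcons b w) (wcons b w')"
    unfolding lex_less_def by (intro exI[of _ "Suc n"]) simp
  then show ?thesis by (simp add: lex_le_def)
qed simp

definition followers :: "bool \<Rightarrow> bword \<Rightarrow> bword set" where
  "followers b u = {suffix u (Suc k) | k. u k = b}"

lemma inf1_eq_linf_followers: "inf1 u = linf (followers True u)"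
  by (simp add: inf1_def followers_def)

lemma sup0_eq_lsup_followers: "sup0 u = lsup (followers False u)"
  by (simp add: sup0_def followers_def)

lemma inf1_le_suffix: "u k \<Longrightarrow> lex_le (inf1 u) (suffix u (Suc k))"
  unfolding inf1_eq_linf_followers followers_def by (rule linf_lower) auto

lemma suffix_le_sup0: "\<not> u k \<Longrightarrow> lex_le (suffix u (Suc k)) (sup0 u)"
  unfolding sup0_eq_lsup_followers followers_def by (rule lsup_upper) auto

lemma neg_suffix: "neg (suffix u k) = suffix (neg u) k"
  by (simp add: neg_def suffix_def)

lemma neg_image_followers: "neg ` followers b u = followers (\<not> b) (neg u)"
proof -
  have "neg ` followers b u = {neg (suffix u (Suc k)) | k. u k = b}"
    unfolding followers_def by blast
  moreover have "neg u k = (\<not> u k)" for k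
    by (simp add: neg_def)
  ultimately show ?thesis by (simp add: followers_def neg_suffix)
qed

lemma sup0_eq_neg_inf1_neg: "sup0 u = neg (inf1 (neg u))"
  by (simp add: sup0_eq_lsup_followers inf1_eq_linf_followers lsup_eq_neg_linf
      neg_image_followers)

lemma wsup_eq_neg_winf_neg: "wsup u = neg (winf (neg u))"
proof -
  have "neg ` {suffix u k | k. True} = {neg (suffix u k) | k. True}"
    by blast
  then have "neg ` {suffix u k | k. True} = {suffix (neg u) k | k. True}"
    by (simp add: neg_suffix)
  then show ?thesis by (simp add: wsup_def winf_def lsup_eq_neg_linf)
qed

lemma followers_wcons:
  "followers c (wcons b w) = (if b = c then insert w (followers c w) else followers c w)"
proof -
  have suffix_wcons: "suffix (wcons b w) (Suc k) = suffix w k" for k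
    by (simp add: fun_eq_iff suffix_def)
  have "followers c (wcons b w) = {suffix w k | k. wcons b w k = c}"
    unfolding followers_def suffix_wcons ..
  also have "\<dots> = {w | _. b = c} \<union> followers c w"
  proof (intro equalityI subsetI)
    fix x assume "x \<in> {suffix w k | k. wcons b w k = c}"
    then obtain k where "x = suffix w k" "wcons b w k = c" by blast
    then show "x \<in> {w | _. b = c} \<union> followers c w"
      by (cases k) (auto simp: followers_def suffix_def)
  next
    fix x assume "x \<in> {w | _. b = c} \<union> followers c w"
    then show "x \<in> {suffix w k | k. wcons b w k = c}"
      unfolding followers_def
      by (auto intro: exI[of _ 0] exI[of _ "Suc _"] simp: suffix_def)
  qed
  finally show ?thesis by auto
qed

lemma inf1_suffix_Suc_change:
  assumes "inf1 (suffix u k) \<noteq> inf1 (suffix u (Suc k))"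
  shows "u k \<and> inf1 (suffix u k) = suffix u (Suc k)"
  using assms linf_insert[of "suffix u (Suc k)" "followers True (suffix u (Suc k))"]
  by (metis followers_wcons inf1_eq_linf_followers suffix_eq_wcons)

lemma sup0_suffix_Suc_change:
  assumes "sup0 (suffix u k) \<noteq> sup0 (suffix u (Suc k))"
  shows "\<not> u k \<and> sup0 (suffix u k) = suffix u (Suc k)"
  using assms inf1_suffix_Suc_change[of "neg u" k]
  by (metis neg_def neg_neg neg_suffix sup0_eq_neg_inf1_neg)

lemma winf_eq_inf1:
  assumes "lex_le (inf1 v) v"
  shows "winf v = inf1 v"
proof -
  have "lex_le (inf1 v) (suffix v j)" for j
  proof (induction j)
    case (Suc j)
    show ?case
    proof (cases "v j")
      case False
      then have "lex_le (suffix v j) (suffix v (Suc j))"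
        using suffix_eq_wcons[of v j] wcons_False_le by metis
      with Suc.IH show ?thesis by (rule lex.order_trans)
    qed (rule inf1_le_suffix)
  qed (simp add: suffix_def assms)
  then have "lex_le (inf1 v) (winf v)"
    unfolding winf_def by (auto intro: linf_greatest)
  moreover have "lex_le (winf v) (inf1 v)"
    unfolding winf_def inf1_def by (rule linf_antimono) auto
  ultimately show ?thesis by (rule lex.order_antisym[rotated])
qed

lemma wsup_eq_sup0: "lex_le v (sup0 v) \<Longrightarrow> wsup v = sup0 v"
  using winf_eq_inf1[of "neg v"]
  by (metis lex_le_neg neg_neg sup0_eq_neg_inf1_neg wsup_eq_neg_winf_neg)

lemma wcons_True_inf1_le_sup0:
  assumes "\<not> u z" "u (Suc z)"
  shows "lex_le (wcons True (inf1 u)) (sup0 u)"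
proof -
  have "lex_le (wcons True (inf1 u)) (wcons True (suffix u (Suc (Suc z))))"
    using inf1_le_suffix[of u "Suc z", OF assms(2)] by (rule wcons_mono)
  also have "wcons True (suffix u (Suc (Suc z))) = suffix u (Suc z)"
    using suffix_eq_wcons[of u "Suc z"] assms(2) by simp
  also have "lex_le \<dots> (sup0 u)"
    using suffix_le_sup0[of u z, OF assms(1)] .
  finally show ?thesis .
qed

lemma inf1_le_wcons_False_sup0:
  assumes "u y" "\<not> u (Suc y)"
  shows "lex_le (inf1 u) (wcons False (sup0 u))"
proof -
  have "lex_le (inf1 u) (suffix u (Suc y))"
    using inf1_le_suffix[of u y, OF assms(1)] .
  also have "suffix u (Suc y) = wcons False (suffix u (Suc (Suc y)))"
    using suffix_eq_wcons[of u "Suc y"] assms(2) by simp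
  also have "lex_le \<dots> (wcons False (sup0 u))"
    using suffix_le_sup0[of u "Suc y", OF assms(2)] by (rule wcons_mono)
  finally show ?thesis .
qed

lemma ex_factor_10:
  assumes "\<forall>k. u \<noteq> (\<lambda>i. k \<le> i)" and "u \<noteq> (\<lambda>_. False)"
  shows "\<exists>y. u y \<and> \<not> u (Suc y)"
proof (rule ccontr)
  assume "\<nexists>y. u y \<and> \<not> u (Suc y)"
  then have "mono u" by (auto simp: mono_iff_le_Suc le_bool_def)
  obtain k where "u k" using assms(2) by auto
  define j where "j = (LEAST i. u i)"
  have "u = (\<lambda>i. j \<le> i)"
  proof
    fix i
    show "u i = (j \<le> i)"
    proof
      show "u i \<Longrightarrow> j \<le> i"
        unfolding j_def by (rule Least_le)
      show "j \<le> i \<Longrightarrow> u i"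
        using monoD[OF \<open>mono u\<close>, of j i] LeastI[of u k, OF \<open>u k\<close>]
        unfolding j_def by (auto simp: le_bool_def)
    qed
  qed
  then show False using assms(1) by blast
qed

lemma ex_suffix_keeping_inf1_sup0_between:
  assumes z: "\<not> u z" "u (Suc z)" and y: "u y" "\<not> u (Suc y)"
  shows "\<exists>k. inf1 (suffix u k) = inf1 u \<and> sup0 (suffix u k) = sup0 u \<and>
             lex_le (inf1 u) (suffix u k) \<and> lex_le (suffix u k) (sup0 u)"
proof -
  define good where "good k \<longleftrightarrow> inf1 (suffix u k) = inf1 u \<and> sup0 (suffix u k) = sup0 u" for k
  show ?thesis
  proof (cases "good (Suc z)")
    case True
    have "lex_le (inf1 u) (suffix u (Suc (Suc z)))" by (rule inf1_le_suffix[of u "Suc z", OF z(2)])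
    also have "lex_le \<dots> (suffix u (Suc z))"
      using suffix_eq_wcons[of u "Suc z"] z(2) le_wcons_True by metis
    finally show ?thesis using True suffix_le_sup0[of u z, OF z(1)] unfolding good_def by blast
  next
    case False
    obtain n where n: "\<not> good n" "\<forall>m<n. good m"
      using False exists_least_iff[of "\<lambda>n. \<not> good n"] by blast
    moreover have "good 0" by (simp add: good_def suffix_def)
    ultimately obtain g where g: "good g" "\<not> good (Suc g)"
      by (cases n) auto
    then consider "inf1 (suffix u (Suc g)) \<noteq> inf1 (suffix u g)"
      | "sup0 (suffix u (Suc g)) \<noteq> sup0 (suffix u g)"
      unfolding good_def by auto
    then show ?thesis
    proof cases
      case 1
      then have "u g" "inf1 u = suffix u (Suc g)"
        using inf1_suffix_Suc_change[of u g] g(1) unfolding good_def by auto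
      then have "suffix u g = wcons True (inf1 u)"
        using suffix_eq_wcons[of u g] by simp
      then show ?thesis
        using g(1) le_wcons_True wcons_True_inf1_le_sup0[OF z] unfolding good_def
        by (auto intro!: exI[of _ g])
    next
      case 2
      then have "\<not> u g" "sup0 u = suffix u (Suc g)"
        using sup0_suffix_Suc_change[of u g] g(1) unfolding good_def by auto
      then have "suffix u g = wcons False (sup0 u)"
        using suffix_eq_wcons[of u g] by simp
      then show ?thesis
        using g(1) wcons_False_le inf1_le_wcons_False_sup0[OF y] unfolding good_def
        by (auto intro!: exI[of _ g])
    qed
  qed
qed

theorem lemma2p5:
  fixes u :: bword
  assumes "\<forall>k. u \<noteq> (\<lambda>i. k \<le> i)"
    and "\<forall>k. u \<noteq> (\<lambda>i. i < k)"
  shows "\<exists>k. winf (suffix u k) = inf1 (suffix u k) \<and> inf1 (suffix u k) = inf1 u \<and>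
             wsup (suffix u k) = sup0 (suffix u k) \<and> sup0 (suffix u k) = sup0 u"
proof -
  obtain y where y: "u y" "\<not> u (Suc y)"
    using ex_factor_10[of u] assms by (metis less_nat_zero_code)
  have "\<forall>k. neg u \<noteq> (\<lambda>i. k \<le> i)" "neg u \<noteq> (\<lambda>_. False)"
    using assms by (metis (no_types) neg_neg neg_def not_le le0)+
  then obtain z where z: "\<not> u z" "u (Suc z)"
    using ex_factor_10[of "neg u"] by (auto simp: neg_def)
  obtain k where "inf1 (suffix u k) = inf1 u" "sup0 (suffix u k) = sup0 u"
    "lex_le (inf1 u) (suffix u k)" "lex_le (suffix u k) (sup0 u)"
    using ex_suffix_keeping_inf1_sup0_between[OF z y] by blast
  then show ?thesis using winf_eq_inf1 wsup_eq_sup0 by metis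
qed

end
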